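(* There is a universal constant $C>0$ such that for any real numbers $\{c_{ij}: 1\le i,j\le 4\}$, $$\min_{S}\sum_{1\le i,j\le 4}c_{ij}S_{u_i}S_{v_j}\le -C\sum_{1\le i,j\le 4}|c_{ij}|,$$ where the minimum is over all assignments $S=(S_{u_1},\dots,S_{u_4},S_{v_1},\dots,S_{v_4})\in\{-1,1\}^8$. In particular, this holds for some $C>\frac{\ln(1+\sqrt{2})}{\pi}$.
   Context: Here $u_1,\dots,u_4$ and $v_1,\dots,v_4$ are the two sides of the complete bipartite graph $K_{4,4}$, with edge set $\{u_1,\dots,u_4\}\times\{v_1,\dots,v_4\}$ and coefficient $c_{ij}$ on edge $(u_i,v_j)$. *)

theory Defs
  imports Complex_Main "HOL-Library.FuncSet"
begin

definition spins4 :: "(nat \<Rightarrow> real) set" where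
  "spins4 = ({1..4} \<rightarrow>\<^sub>E {-1, 1})"

text \<open>Energy sum_{i,j} c_ij S_{u_i} S_{v_j}; x i = S_{u_i}, y j = S_{v_j}.\<close>
definition bip_energy :: "(nat \<Rightarrow> nat \<Rightarrow> real) \<Rightarrow> (nat \<Rightarrow> real) \<Rightarrow> (nat \<Rightarrow> real) \<Rightarrow> real" where
  "bip_energy c x y = (\<Sum>i=1..4. \<Sum>j=1..4. c i j * x i * y j)"

end

(* Fixing the spins y on the v-side, the best u-spins point against the local fields
   h_i = sum_j c_ij y_j, which gives energy -sum_i |h_i|.  Averaging over the 16 choices of y
   and using the Khintchine-type bound  sum_{e in {-1,1}^4} |sum_j a_j e_j| >= 6 sum_j |a_j|
   (an equality for a = (1,1,1,1)) shows that the minimum is at most -(3/8) sum_ij |c_ij|.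
   Finally ln(1 + sqrt 2) < 1 < 3 pi/8. *)

theory Submission
  imports Defs "HOL-Analysis.Complex_Transcendental"
begin

lemma sum_PiE_insert:
  assumes "i \<notin> I"
  shows "(\<Sum>f\<in>Pi\<^sub>E (insert i I) T. g f) = (\<Sum>t\<in>T i. \<Sum>f\<in>Pi\<^sub>E I T. g (f(i := t)))"
  unfolding PiE_insert_eq sum.reindex[OF inj_combinator[OF assms]]
  by (simp add: sum.cartesian_product split_def)

lemma atLeastAtMost_1_4: "{1..4::nat} = {1, 2, 3, 4}"
  by auto

lemma sum_1_4: "(\<Sum>i=1..4::nat. f i) = f 1 + f 2 + f 3 + f 4"
  unfolding atLeastAtMost_1_4 by (simp add: ac_simps)

lemma finite_spins4: "finite spins4"
  unfolding spins4_def by (rule finite_PiE) auto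

lemma card_spins4: "card spins4 = 16"
proof -
  have "card {-1, 1::real} = 2" by simp
  then show ?thesis
    unfolding spins4_def atLeastAtMost_1_4 by (subst card_funcsetE) auto
qed

lemma sum_spins4:
  "(\<Sum>y\<in>spins4. f (y 1) (y 2) (y 3) (y 4)) =
   (\<Sum>e1\<in>{-1,1}. \<Sum>e2\<in>{-1,1}. \<Sum>e3\<in>{-1,1}. \<Sum>e4\<in>{-1,1}. f e1 e2 e3 e4)"
  unfolding spins4_def atLeastAtMost_1_4 by (simp add: sum_PiE_insert)

definition rademacher_abs_sum :: "real \<Rightarrow> real \<Rightarrow> real \<Rightarrow> real \<Rightarrow> real" where
  "rademacher_abs_sum a b c d =
    (\<Sum>e1\<in>{-1,1}. \<Sum>e2\<in>{-1,1}. \<Sum>e3\<in>{-1,1}. \<Sum>e4\<in>{-1,1}. \<bar>a * e1 + b * e2 + c * e3 + d * e4\<bar>)"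

lemma rademacher_abs_sum_uminus:
  "rademacher_abs_sum (-a) b c d = rademacher_abs_sum a b c d"
  "rademacher_abs_sum a (-b) c d = rademacher_abs_sum a b c d"
  "rademacher_abs_sum a b (-c) d = rademacher_abs_sum a b c d"
  "rademacher_abs_sum a b c (-d) = rademacher_abs_sum a b c d"
  unfolding rademacher_abs_sum_def by (simp_all add: algebra_simps)

lemma rademacher_abs_sum_abs:
  "rademacher_abs_sum \<bar>a\<bar> \<bar>b\<bar> \<bar>c\<bar> \<bar>d\<bar> = rademacher_abs_sum a b c d"
  by (cases "a \<ge> 0"; cases "b \<ge> 0"; cases "c \<ge> 0"; cases "d \<ge> 0")
    (simp_all add: rademacher_abs_sum_uminus)

lemma sgn_mult_le_abs: "sgn t * x \<le> \<bar>x\<bar>" for t x :: real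
  by (auto simp: sgn_if)

text \<open>The test function is the majority sign sgn(e1 + e2 + e3 + e4); each e_j agrees with it
  in 6 more of the 16 sign patterns than it disagrees.\<close>

lemma rademacher_abs_sum_ge: "6 * (a + b + c + d) \<le> rademacher_abs_sum a b c d"
proof -
  have "6 * (a + b + c + d) =
    (\<Sum>e1\<in>{-1,1}. \<Sum>e2\<in>{-1,1}. \<Sum>e3\<in>{-1,1}. \<Sum>e4\<in>{-1,1::real}.
       sgn (e1 + e2 + e3 + e4) * (a * e1 + b * e2 + c * e3 + d * e4))"
    by simp
  also have "\<dots> \<le> rademacher_abs_sum a b c d"
    unfolding rademacher_abs_sum_def by (intro sum_mono sgn_mult_le_abs)
  finally show ?thesis .
qed

lemma rademacher_abs_sum_ge_abs:
  "6 * (\<bar>a\<bar> + \<bar>b\<bar> + \<bar>c\<bar> + \<bar>d\<bar>) \<le> rademacher_abs_sum a b c d"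
  using rademacher_abs_sum_ge[of "\<bar>a\<bar>" "\<bar>b\<bar>" "\<bar>c\<bar>" "\<bar>d\<bar>"]
  by (simp add: rademacher_abs_sum_abs)

lemma sum_spins4_abs_ge:
  "6 * (\<Sum>j=1..4. \<bar>a j\<bar>) \<le> (\<Sum>y\<in>spins4. \<bar>\<Sum>j=1..4. a j * y j\<bar>)"
proof -
  have "(\<Sum>y\<in>spins4. \<bar>\<Sum>j=1..4. a j * y j\<bar>) = rademacher_abs_sum (a 1) (a 2) (a 3) (a 4)"
    unfolding sum_1_4 rademacher_abs_sum_def
    by (rule sum_spins4[where f = "\<lambda>e1 e2 e3 e4. \<bar>a 1 * e1 + a 2 * e2 + a 3 * e3 + a 4 * e4\<bar>"])
  then show ?thesis
    using rademacher_abs_sum_ge_abs[of "a 1" "a 2" "a 3" "a 4"] by (simp only: sum_1_4)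
qed

definition ground_energy :: "(nat \<Rightarrow> nat \<Rightarrow> real) \<Rightarrow> real" where
  "ground_energy c = Min ((\<lambda>(x, y). bip_energy c x y) ` (spins4 \<times> spins4))"

lemma ground_energy_le:
  assumes "x \<in> spins4" "y \<in> spins4"
  shows "ground_energy c \<le> bip_energy c x y"
  unfolding ground_energy_def using assms finite_spins4 by (force intro: Min_le)

lemma bip_energy_best_response:
  assumes "y \<in> spins4"
  shows "\<exists>x\<in>spins4. bip_energy c x y = - (\<Sum>i=1..4. \<bar>\<Sum>j=1..4. c i j * y j\<bar>)"
proof
  let ?field = "\<lambda>i. \<Sum>j=1..4. c i j * y j"
  define x where "x = restrict (\<lambda>i. if ?field i \<ge> 0 then -1 else 1::real) {1..4}"
  show "x \<in> spins4"
    unfolding x_def spins4_def by auto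
  have "bip_energy c x y = (\<Sum>i=1..4. x i * ?field i)"
    unfolding bip_energy_def by (simp add: sum_distrib_left mult.commute mult.left_commute)
  also have "\<dots> = (\<Sum>i=1..4. - \<bar>?field i\<bar>)"
    by (rule sum.cong) (auto simp: x_def)
  finally show "bip_energy c x y = - (\<Sum>i=1..4. \<bar>?field i\<bar>)"
    by (simp add: sum_negf)
qed

lemma ground_energy_le_mean:
  "16 * ground_energy c \<le> - (\<Sum>y\<in>spins4. \<Sum>i=1..4. \<bar>\<Sum>j=1..4. c i j * y j\<bar>)"
proof -
  have "ground_energy c \<le> - (\<Sum>i=1..4. \<bar>\<Sum>j=1..4. c i j * y j\<bar>)" if "y \<in> spins4" for y
    using bip_energy_best_response[OF that] ground_energy_le that by metis
  then have "of_nat (card spins4) * ground_energy c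
      \<le> (\<Sum>y\<in>spins4. - (\<Sum>i=1..4. \<bar>\<Sum>j=1..4. c i j * y j\<bar>))"
    by (rule sum_bounded_below)
  then show ?thesis
    by (simp add: card_spins4 sum_negf)
qed

lemma ground_energy_le_abs_sum:
  "ground_energy c \<le> - (3/8) * (\<Sum>i=1..4. \<Sum>j=1..4. \<bar>c i j\<bar>)"
proof -
  have "6 * (\<Sum>i=1..4. \<Sum>j=1..4. \<bar>c i j\<bar>) =
      (\<Sum>i=1..4. 6 * (\<Sum>j=1..4. \<bar>c i j\<bar>))"
    by (rule sum_distrib_left)
  also have "\<dots> \<le> (\<Sum>i=1..4. \<Sum>y\<in>spins4. \<bar>\<Sum>j=1..4. c i j * y j\<bar>)"
    by (intro sum_mono sum_spins4_abs_ge)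
  also have "\<dots> = (\<Sum>y\<in>spins4. \<Sum>i=1..4. \<bar>\<Sum>j=1..4. c i j * y j\<bar>)"
    by (rule sum.swap)
  finally show ?thesis
    using ground_energy_le_mean[of c] by linarith
qed

lemma ln_one_plus_sqrt2_div_pi_less: "ln (1 + sqrt 2) / pi < 3/8"
proof -
  have "sqrt 2 < 3/2"
    by (rule real_less_lsqrt) (auto simp: power2_eq_square)
  moreover have "1 + 1 + 1^2/2 \<le> exp (1::real)"
    using exp_lower_Taylor_quadratic[of 1] by simp
  ultimately have "1 + sqrt 2 < exp 1"
    by simp
  then have "ln (1 + sqrt 2) < ln (exp 1)"
    by (subst ln_less_cancel_iff) (auto intro: add_pos_nonneg)
  then have "ln (1 + sqrt 2) < 3/8 * pi"
    using pi_gt3 by simp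
  then show ?thesis
    by (simp add: divide_less_eq)
qed

theorem lemma2:
  shows "\<exists>C::real. C > 0 \<and> C > ln (1 + sqrt 2) / pi \<and>
    (\<forall>c :: nat \<Rightarrow> nat \<Rightarrow> real.
       Min ((\<lambda>(x, y). bip_energy c x y) ` (spins4 \<times> spins4))
         \<le> - C * (\<Sum>i=1..4. \<Sum>j=1..4. \<bar>c i j\<bar>))"
  using ln_one_plus_sqrt2_div_pi_less ground_energy_le_abs_sum
  unfolding ground_energy_def by (intro exI[of _ "3/8"]) auto

end
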